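(* Consider a connected regular graph with a proper two-coloring having $N_{\mathrm{G}}=N_{\mathrm{R}}=N/2$ green and red vertices, under the colored Moran process with fitness values $a_{\mathrm{G}}=r+\sigma$, $a_{\mathrm{R}}=r-\sigma$, $b_{\mathrm{G}}=1+\sigma$, $b_{\mathrm{R}}=1-\sigma$, where $r>0$, $r\neq1$, and $0\le\sigma<\min(1,r)$. Then the mean fixation probability of a single randomly placed $A$ is $$\rho_A=\frac{r(r-1)}{(r^2-\sigma^2)\left(1-\left(\frac{1-\sigma^2}{r^2-\sigma^2}\right)^{N/2}\right)}.$$ Consequently, on $0\le\sigma<\min(1,r)$, $\rho_A$ is an increasing function of $\sigma$ when $r>1$ and a decreasing function of $\sigma$ when $r<1$; and when $r=1$, $\rho_A=1/N$ for all $\sigma\in[0,1)$.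
   Context: A proper two-coloring assigns each vertex green or red so that adjacent vertices have different colors. Each vertex holds a type $A$ or type $B$ individual; $A$ has fitness $a_{\mathrm{G}}$ on green and $a_{\mathrm{R}}$ on red vertices, $B$ has $b_{\mathrm{G}}$ on green and $b_{\mathrm{R}}$ on red. Colored Moran process: each step an individual is chosen to reproduce with probability proportional to fitness and its offspring replaces a uniformly random neighbor. The mean fixation probability of $A$ is the probability that a single $A$, placed at a uniformly random vertex in an all-$B$ population, eventually takes over. *)

theory Defs
  imports Complex_Main
begin

definition simple_graph :: "'v set \<Rightarrow> ('v \<Rightarrow> 'v \<Rightarrow> bool) \<Rightarrow> bool" where
  "simple_graph V E \<longleftrightarrow> finite V \<and> (\<forall>x y. E x y \<longrightarrow> x \<in> V \<and> y \<in> V)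
     \<and> (\<forall>x y. E x y \<longrightarrow> E y x) \<and> (\<forall>x. \<not> E x x)"

definition connected_graph :: "'v set \<Rightarrow> ('v \<Rightarrow> 'v \<Rightarrow> bool) \<Rightarrow> bool" where
  "connected_graph V E \<longleftrightarrow> V \<noteq> {} \<and> (\<forall>u\<in>V. \<forall>v\<in>V. E\<^sup>*\<^sup>* u v)"

definition deg :: "'v set \<Rightarrow> ('v \<Rightarrow> 'v \<Rightarrow> bool) \<Rightarrow> 'v \<Rightarrow> nat" where
  "deg V E v = card {w\<in>V. E v w}"

definition regular_graph :: "'v set \<Rightarrow> ('v \<Rightarrow> 'v \<Rightarrow> bool) \<Rightarrow> bool" where
  "regular_graph V E \<longleftrightarrow> (\<exists>k. \<forall>v\<in>V. deg V E v = k)"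

definition proper_two_coloring :: "('v \<Rightarrow> 'v \<Rightarrow> bool) \<Rightarrow> ('v \<Rightarrow> bool) \<Rightarrow> bool" where
  "proper_two_coloring E green \<longleftrightarrow> (\<forall>x y. E x y \<longrightarrow> green x \<noteq> green y)"

text \<open>Fitness of the individual at vertex i when S is the set of vertices holding type A.\<close>
definition fitness :: "('v \<Rightarrow> bool) \<Rightarrow> real \<Rightarrow> real \<Rightarrow> real \<Rightarrow> real \<Rightarrow> 'v set \<Rightarrow> 'v \<Rightarrow> real" where
  "fitness green aG aR bG bR S i =
     (if i \<in> S then (if green i then aG else aR) else (if green i then bG else bR))"

definition total_fitness :: "'v set \<Rightarrow> ('v \<Rightarrow> bool) \<Rightarrow> real \<Rightarrow> real \<Rightarrow> real \<Rightarrow> real \<Rightarrow> 'v set \<Rightarrow> real" where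
  "total_fitness V green aG aR bG bR S = (\<Sum>i\<in>V. fitness green aG aR bG bR S i)"

definition offspring_state :: "'v set \<Rightarrow> 'v \<Rightarrow> 'v \<Rightarrow> 'v set" where
  "offspring_state S i j = (if i \<in> S then insert j S else S - {j})"

text \<open>Probability that the chain started in S is in the all-A state V after n steps
  (V is absorbing, so this is the probability of fixation within n steps).\<close>
fun fix_within :: "'v set \<Rightarrow> ('v \<Rightarrow> 'v \<Rightarrow> bool) \<Rightarrow> ('v \<Rightarrow> bool)
    \<Rightarrow> real \<Rightarrow> real \<Rightarrow> real \<Rightarrow> real \<Rightarrow> nat \<Rightarrow> 'v set \<Rightarrow> real" where
  "fix_within V E green aG aR bG bR 0 S = (if S = V then 1 else 0)"
| "fix_within V E green aG aR bG bR (Suc n) S =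
     (\<Sum>i\<in>V. \<Sum>j\<in>{w\<in>V. E i w}.
        fitness green aG aR bG bR S i / total_fitness V green aG aR bG bR S * (1 / real (deg V E i))
        * fix_within V E green aG aR bG bR n (offspring_state S i j))"

definition fixation_prob :: "'v set \<Rightarrow> ('v \<Rightarrow> 'v \<Rightarrow> bool) \<Rightarrow> ('v \<Rightarrow> bool)
    \<Rightarrow> real \<Rightarrow> real \<Rightarrow> real \<Rightarrow> real \<Rightarrow> 'v set \<Rightarrow> real" where
  "fixation_prob V E green aG aR bG bR S = lim (\<lambda>n. fix_within V E green aG aR bG bR n S)"

definition mean_fixation_A :: "'v set \<Rightarrow> ('v \<Rightarrow> 'v \<Rightarrow> bool) \<Rightarrow> ('v \<Rightarrow> bool)
    \<Rightarrow> real \<Rightarrow> real \<Rightarrow> real \<Rightarrow> real \<Rightarrow> real" where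
  "mean_fixation_A V E green aG aR bG bR =
     (\<Sum>v\<in>V. fixation_prob V E green aG aR bG bR {v}) / real (card V)"

end

theory Submission
  imports Defs
begin

text \<open>The fixation probability is the unique function of the A-set that is harmonic for the
  Moran chain and takes the values 0 on the empty set and 1 on V; uniqueness holds because from
  any state the chain is absorbed within |V| steps with probability bounded away from 0.
  On a properly two-coloured regular graph with aG - bG = aR - bR, a product
  S \<mapsto> (1 - \<Prod>v\<in>S. t v) / (1 - \<Prod>v\<in>V. t v) is harmonic, where t v is the B/A fitness ratio of
  the colour opposite to v: it balances the flux across every edge. For the fitness values
  r \<pm> \<sigma>, 1 \<pm> \<sigma> and equal colour classes of size n this gives the closed form, and
  1 - x^n = (1 - x) \<Sum>m<n. x^m with x = (1 - \<sigma>^2) / (r^2 - \<sigma>^2) shows that the fixation probability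
  moves with \<sigma> in the direction opposite to x. In the neutral case r = 1 the harmonic function
  is S \<mapsto> (\<Sum>v\<in>S. f v) / (\<Sum>v\<in>V. f v) with f the vertex fitness, so the mean is 1/|V|.\<close>

lemma rtranclp_leaves_set:
  "E\<^sup>*\<^sup>* u v \<Longrightarrow> u \<in> S \<Longrightarrow> v \<notin> S \<Longrightarrow> \<exists>i j. i \<in> S \<and> j \<notin> S \<and> E i j"
  by (induction rule: rtranclp_induct) blast+

locale connected_regular_graph =
  fixes V :: "'v set" and E :: "'v \<Rightarrow> 'v \<Rightarrow> bool" and k :: nat
  assumes simple: "simple_graph V E" and connected: "connected_graph V E"
    and deg_eq: "\<And>v. v \<in> V \<Longrightarrow> deg V E v = k" and deg_pos: "k > 0"
begin

lemma finite_V: "finite V" using simple by (simp add: simple_graph_def)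
lemma V_nonempty: "V \<noteq> {}" using connected by (simp add: connected_graph_def)
lemma card_V_pos: "card V > 0" using finite_V V_nonempty by (simp add: card_gt_0_iff)
lemma edge_in_V: "E i j \<Longrightarrow> i \<in> V \<and> j \<in> V" using simple by (simp add: simple_graph_def)
lemma edge_sym: "E i j \<Longrightarrow> E j i" using simple by (simp add: simple_graph_def)

lemma card_neighbours: "v \<in> V \<Longrightarrow> card {w\<in>V. E v w} = k"
  using deg_eq by (simp add: deg_def)

lemma exists_boundary_edge:
  assumes "S \<subseteq> V" "S \<noteq> {}"
  shows "\<exists>i j. i \<in> S \<and> E i j \<and> (S \<noteq> V \<longrightarrow> j \<notin> S)"
proof (cases "S = V")
  case True
  then obtain i where i: "i \<in> S" using assms by auto
  have "{w\<in>V. E i w} \<noteq> {}"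
    using card_neighbours[of i] i True deg_pos by (metis card.empty less_irrefl)
  then show ?thesis using i True by auto
next
  case False
  obtain u v where "u \<in> S" "v \<in> V" "v \<notin> S" using assms False by auto
  moreover have "E\<^sup>*\<^sup>* u v" using connected \<open>u \<in> S\<close> \<open>v \<in> V\<close> assms(1)
    by (auto simp: connected_graph_def)
  ultimately show ?thesis using rtranclp_leaves_set[of E u v S] by blast
qed

end

lemma connected_regular_graphI:
  assumes simple: "simple_graph V E" and connected: "connected_graph V E"
    and regular: "regular_graph V E" and two: "2 \<le> card V"
  shows "\<exists>k. connected_regular_graph V E k"
proof -
  obtain k where deg: "\<And>v. v \<in> V \<Longrightarrow> deg V E v = k" using regular by (auto simp: regular_graph_def)
  have "finite V" using simple by (simp add: simple_graph_def)
  then obtain u v where uv: "u \<in> V" "v \<in> V" "u \<noteq> v"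
    using two card_le_Suc0_iff_eq[of V] by auto
  have "E\<^sup>*\<^sup>* v u" using connected uv by (auto simp: connected_graph_def)
  then obtain w where "E v w" using uv(3) by (metis converse_rtranclpE)
  then have "w \<in> {w\<in>V. E v w}" using simple by (auto simp: simple_graph_def)
  then have "k > 0"
    using deg[OF uv(2)] \<open>finite V\<close> by (auto simp: deg_def card_gt_0_iff)
  then show ?thesis using simple connected deg by (auto simp: connected_regular_graph_def)
qed

locale moran_process = connected_regular_graph V E k
  for V :: "'v set" and E :: "'v \<Rightarrow> 'v \<Rightarrow> bool" and k :: nat +
  fixes green :: "'v \<Rightarrow> bool" and aG aR bG bR :: real
  assumes fitness_pos: "aG > 0" "aR > 0" "bG > 0" "bR > 0"
begin

abbreviation fit :: "'v set \<Rightarrow> 'v \<Rightarrow> real" where "fit \<equiv> fitness green aG aR bG bR"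
abbreviation total :: "'v set \<Rightarrow> real" where "total \<equiv> total_fitness V green aG aR bG bR"
abbreviation fix_after :: "nat \<Rightarrow> 'v set \<Rightarrow> real" where
  "fix_after n \<equiv> fix_within V E green aG aR bG bR n"

definition step :: "('v set \<Rightarrow> real) \<Rightarrow> 'v set \<Rightarrow> real" where
  "step f S = (\<Sum>i\<in>V. \<Sum>j\<in>{w\<in>V. E i w}.
     fit S i / total S * (1 / real (deg V E i)) * f (offspring_state S i j))"

lemma fix_after_Suc: "fix_after (Suc n) S = step (fix_after n) S"
  by (simp add: step_def)

lemma fit_pos: "fit S i > 0"
  using fitness_pos by (simp add: fitness_def)

lemma total_pos: "total S > 0"
  unfolding total_fitness_def by (rule sum_pos[OF finite_V V_nonempty]) (simp add: fit_pos)

lemma step_weight_nonneg: "0 \<le> fit S i / total S * (1 / real (deg V E i))"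
  using fit_pos[of S i] total_pos[of S] by simp

lemma step_eq_normalized:
  "step f S = (\<Sum>i\<in>V. \<Sum>j\<in>{w\<in>V. E i w}. fit S i * f (offspring_state S i j)) / (total S * k)"
proof -
  have "step f S = (\<Sum>i\<in>V. \<Sum>j\<in>{w\<in>V. E i w}. fit S i * f (offspring_state S i j) / (total S * k))"
    unfolding step_def by (intro sum.cong refl) (simp add: deg_eq)
  then show ?thesis by (simp add: sum_divide_distrib)
qed

lemma step_const: "step (\<lambda>_. c) S = c"
proof -
  have "(\<Sum>i\<in>V. \<Sum>j\<in>{w\<in>V. E i w}. fit S i * c) = (\<Sum>i\<in>V. k * (fit S i * c))"
    by (intro sum.cong refl) (simp add: card_neighbours)
  also have "\<dots> = k * c * total S"
    by (simp add: total_fitness_def sum_distrib_left algebra_simps)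
  finally show ?thesis using total_pos[of S] deg_pos by (simp add: step_eq_normalized)
qed

lemma step_diff: "step (\<lambda>S. f S - h S) S = step f S - step h S"
  unfolding step_def by (simp add: sum_subtractf[symmetric] right_diff_distrib)

lemma step_add: "step (\<lambda>S. f S + h S) S = step f S + step h S"
  unfolding step_def by (simp add: sum.distrib[symmetric] distrib_left)

lemma step_scale: "step (\<lambda>S. c * f S) S = c * step f S"
  unfolding step_def by (simp add: sum_distrib_left mult_ac)

lemma offspring_state_subset: "S \<subseteq> V \<Longrightarrow> j \<in> V \<Longrightarrow> offspring_state S i j \<subseteq> V"
  by (auto simp: offspring_state_def)

lemma step_mono:
  assumes "S \<subseteq> V" "\<And>S'. S' \<subseteq> V \<Longrightarrow> f S' \<le> h S'"
  shows "step f S \<le> step h S"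
  unfolding step_def
  by (intro sum_mono mult_left_mono step_weight_nonneg assms(2) offspring_state_subset[OF assms(1)])
    auto

lemma step_cong:
  assumes "S \<subseteq> V" "\<And>S'. S' \<subseteq> V \<Longrightarrow> f S' = h S'"
  shows "step f S = step h S"
  using step_mono[OF assms(1), of f h] step_mono[OF assms(1), of h f] assms(2) by force

lemma step_absorbing: "S = V \<or> S = {} \<Longrightarrow> step f S = f S"
proof -
  assume "S = V \<or> S = {}"
  then have "step f S = step (\<lambda>_. f S) S"
    unfolding step_def by (intro sum.cong refl) (auto simp: offspring_state_def insert_absorb)
  then show ?thesis by (simp add: step_const)
qed

text \<open>Harmonicity reduces to a balance across each edge from S to its complement: the moves
  along i \<rightarrow> j and j \<rightarrow> i are equally likely up to the fitness factor, and every other move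
  leaves S unchanged.\<close>
lemma step_balanced:
  assumes balance: "\<And>i j. E i j \<Longrightarrow> i \<in> S \<Longrightarrow> j \<notin> S \<Longrightarrow>
     fit S i * (\<phi> (insert j S) - \<phi> S) + fit S j * (\<phi> (S - {i}) - \<phi> S) = 0"
  shows "step \<phi> S = \<phi> S"
proof -
  define D where
    "D i j = (if E i j then fit S i * (\<phi> (offspring_state S i j) - \<phi> S) else 0)" for i j
  have antisym: "D i j + D j i = 0" for i j
  proof (cases "E i j")
    case True
    then have "E j i" by (rule edge_sym)
    consider "i \<in> S" "j \<in> S" | "i \<notin> S" "j \<notin> S" | "i \<in> S" "j \<notin> S" | "i \<notin> S" "j \<in> S"
      by blast
    then show ?thesis
      by cases (use balance[OF True] balance[OF \<open>E j i\<close>] True \<open>E j i\<close> in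
          \<open>simp_all add: D_def offspring_state_def insert_absorb\<close>)
  next
    case False
    then have "\<not> E j i" using edge_sym by blast
    with False show ?thesis by (simp add: D_def)
  qed
  have "(\<Sum>i\<in>V. \<Sum>j\<in>V. D i j) = (\<Sum>i\<in>V. \<Sum>j\<in>V. D j i)"
    by (rule sum.swap)
  then have "2 * (\<Sum>i\<in>V. \<Sum>j\<in>V. D i j) = (\<Sum>i\<in>V. \<Sum>j\<in>V. D i j + D j i)"
    by (simp add: sum.distrib)
  also have "\<dots> = 0" by (simp add: antisym)
  finally have "(\<Sum>i\<in>V. \<Sum>j\<in>V. D i j) = 0" by simp
  moreover have "(\<Sum>i\<in>V. \<Sum>j\<in>{w\<in>V. E i w}. fit S i * (\<phi> (offspring_state S i j) - \<phi> S))
      = (\<Sum>i\<in>V. \<Sum>j\<in>V. D i j)"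
    by (rule sum.cong[OF refl]) (simp add: sum.inter_filter[OF finite_V] D_def)
  ultimately have "step (\<lambda>S'. \<phi> S' - \<phi> S) S = 0" by (simp add: step_eq_normalized)
  then show ?thesis by (simp add: step_diff step_const)
qed

lemma step_iter_const: "(step ^^ n) (\<lambda>_. c) = (\<lambda>_. c)"
  by (induction n) (simp_all add: step_const)

lemma step_iter_add: "(step ^^ n) (\<lambda>S. f S + h S) S = (step ^^ n) f S + (step ^^ n) h S"
proof (induction n arbitrary: S)
  case (Suc n)
  then have "(step ^^ n) (\<lambda>S. f S + h S) = (\<lambda>S. (step ^^ n) f S + (step ^^ n) h S)"
    by (simp add: fun_eq_iff)
  then show ?case by (simp add: step_add)
qed simp

lemma step_iter_scale: "(step ^^ n) (\<lambda>S. c * f S) S = c * (step ^^ n) f S"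
proof (induction n arbitrary: S)
  case (Suc n)
  then have "(step ^^ n) (\<lambda>S. c * f S) = (\<lambda>S. c * (step ^^ n) f S)" by (simp add: fun_eq_iff)
  then show ?case by (simp add: step_scale)
qed simp

lemma step_iter_diff: "(step ^^ n) (\<lambda>S. f S - h S) S = (step ^^ n) f S - (step ^^ n) h S"
  using step_iter_add[of n f "\<lambda>S. (-1) * h S"] step_iter_scale[of n "-1" h] by simp

lemma step_iter_mono:
  "S \<subseteq> V \<Longrightarrow> (\<And>S'. S' \<subseteq> V \<Longrightarrow> f S' \<le> h S') \<Longrightarrow> (step ^^ n) f S \<le> (step ^^ n) h S"
proof (induction n arbitrary: S)
  case (Suc n)
  show ?case
    by (simp only: funpow.simps comp_apply)
      (rule step_mono[OF Suc.prems(1)], rule Suc.IH[OF _ Suc.prems(2)])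
qed simp

lemma step_iter_absorbing: "S = V \<or> S = {} \<Longrightarrow> (step ^^ n) f S = f S"
  by (induction n) (simp_all add: step_absorbing)

lemma step_iter_harmonic:
  "(\<And>S. S \<subseteq> V \<Longrightarrow> step \<phi> S = \<phi> S) \<Longrightarrow> S \<subseteq> V \<Longrightarrow> (step ^^ n) \<phi> S = \<phi> S"
proof (induction n arbitrary: S)
  case (Suc n)
  have "step ((step ^^ n) \<phi>) S = step \<phi> S"
    by (rule step_cong[OF Suc.prems(2)]) (rule Suc.IH[OF Suc.prems(1)])
  then show ?case using Suc.prems by simp
qed simp

lemma fix_after_eq_step_iter: "fix_after n = (step ^^ n) (\<lambda>S. if S = V then 1 else 0)"
proof (induction n)
  case (Suc n)
  show ?case by (rule ext) (simp only: fix_after_Suc Suc funpow.simps comp_apply)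
qed (simp add: fun_eq_iff)

lemma fix_after_nonneg: "0 \<le> fix_after n S"
proof (induction n arbitrary: S)
  case (Suc n)
  then show ?case
    by (simp only: fix_after_Suc step_def) (intro sum_nonneg mult_nonneg_nonneg step_weight_nonneg)
qed simp

definition min_weight :: real where
  "min_weight = min (min aG aR) (min bG bR) / (card V * max (max aG aR) (max bG bR) * k)"

lemma min_weight_pos: "min_weight > 0"
  using fitness_pos card_V_pos deg_pos by (simp add: min_weight_def)

lemma min_weight_le_one: "min_weight \<le> 1"
proof -
  let ?m = "min (min aG aR) (min bG bR)" and ?M = "max (max aG aR) (max bG bR)"
  have "1 \<le> card V * k" using card_V_pos deg_pos by (simp add: Suc_le_eq)
  then have "?M * 1 \<le> ?M * (card V * k)"
    using fitness_pos by (intro mult_left_mono) (auto simp flip: of_nat_mult)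
  then have "?m \<le> ?M * (card V * k)" by linarith
  then show ?thesis using fitness_pos card_V_pos deg_pos by (simp add: min_weight_def mult_ac)
qed

lemma min_weight_le_step_weight:
  assumes "i \<in> V" shows "min_weight \<le> fit S i / total S * (1 / real (deg V E i))"
proof -
  have fit_ge: "min (min aG aR) (min bG bR) \<le> fit S i"
    unfolding fitness_def by (auto simp: min_le_iff_disj)
  have "total S \<le> real (card V) * max (max aG aR) (max bG bR)"
    unfolding total_fitness_def
    by (rule order_trans[OF sum_bounded_above[of V _ "max (max aG aR) (max bG bR)"]])
      (auto simp: fitness_def)
  then have total_le: "total S * k \<le> real (card V) * max (max aG aR) (max bG bR) * k"
    by (simp add: mult_right_mono)
  have "min_weight \<le> fit S i / (total S * k)" unfolding min_weight_def
    by (rule frac_le) (use fit_ge total_le fitness_pos total_pos[of S] deg_pos in auto)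
  then show ?thesis using deg_eq[OF assms] by simp
qed

text \<open>Adding one more A along a boundary edge each step fixes the chain within |V - S| steps.\<close>
lemma fix_after_lower_bound:
  "S \<subseteq> V \<Longrightarrow> S \<noteq> {} \<Longrightarrow> card (V - S) \<le> n \<Longrightarrow> min_weight ^ n \<le> fix_after n S"
proof (induction n arbitrary: S)
  case 0
  then have "S = V" using finite_V by auto
  then show ?case by simp
next
  case (Suc n)
  obtain i j where ij: "i \<in> S" "E i j" "S \<noteq> V \<longrightarrow> j \<notin> S"
    using exists_boundary_edge[OF Suc.prems(1,2)] by blast
  have iV: "i \<in> V" and jV: "j \<in> V" using edge_in_V[OF ij(2)] by auto
  have off: "offspring_state S i j = insert j S" using ij by (simp add: offspring_state_def)
  have "card (V - insert j S) \<le> n"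
  proof (cases "S = V")
    case False
    then have "card (V - insert j S) = card (V - S) - 1"
      using ij jV finite_V by (metis Diff_insert DiffI card_Diff_singleton finite_Diff)
    then show ?thesis using Suc.prems(3) by simp
  qed (use jV in \<open>simp add: insert_absorb\<close>)
  then have IH: "min_weight ^ n \<le> fix_after n (insert j S)"
    using Suc.IH[of "insert j S"] Suc.prems jV by blast
  define T where "T i' j' = fit S i' / total S * (1 / real (deg V E i'))
    * fix_after n (offspring_state S i' j')" for i' j'
  have T_nonneg: "0 \<le> T i' j'" for i' j'
    unfolding T_def by (intro mult_nonneg_nonneg step_weight_nonneg fix_after_nonneg)
  have "min_weight ^ Suc n = min_weight * min_weight ^ n" by simp
  also have "\<dots> \<le> T i j" unfolding T_def off
    by (rule mult_mono[OF min_weight_le_step_weight[OF iV] IH])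
      (use min_weight_pos step_weight_nonneg in auto)
  also have "\<dots> \<le> (\<Sum>j'\<in>{w\<in>V. E i w}. T i j')"
    by (rule member_le_sum) (use ij jV finite_V T_nonneg in auto)
  also have "\<dots> \<le> (\<Sum>i'\<in>V. \<Sum>j'\<in>{w\<in>V. E i' w}. T i' j')"
    by (rule member_le_sum[where f = "\<lambda>i'. \<Sum>j'\<in>{w\<in>V. E i' w}. T i' j'"])
      (use iV finite_V T_nonneg in \<open>auto intro: sum_nonneg\<close>)
  also have "\<dots> = fix_after (Suc n) S" by (simp add: T_def)
  finally show ?case .
qed

definition transient :: "'v set \<Rightarrow> real" where
  "transient S = (if S \<noteq> {} \<and> S \<noteq> V then 1 else 0)"

abbreviation survival :: "nat \<Rightarrow> 'v set \<Rightarrow> real" where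
  "survival n \<equiv> (step ^^ n) transient"

lemma survival_nonneg: "S \<subseteq> V \<Longrightarrow> 0 \<le> survival n S"
  using step_iter_mono[of S "\<lambda>_. 0" transient n] by (simp add: step_iter_const transient_def)

lemma survival_card_V:
  assumes "S \<subseteq> V" shows "survival (card V) S \<le> (1 - min_weight ^ card V) * transient S"
proof (cases "S = V \<or> S = {}")
  case True
  then show ?thesis by (auto simp: step_iter_absorbing transient_def)
next
  case False
  then have "S \<noteq> {}" and transient_S: "transient S = 1" by (auto simp: transient_def)
  have "card (V - S) \<le> card V" using finite_V by (simp add: card_mono)
  then have fixed: "min_weight ^ card V \<le> fix_after (card V) S"
    by (rule fix_after_lower_bound[OF assms \<open>S \<noteq> {}\<close>])
  have "survival (card V) S + fix_after (card V) S
      = (step ^^ card V) (\<lambda>S. transient S + (if S = V then 1 else 0)) S"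
    by (simp add: step_iter_add fix_after_eq_step_iter)
  also have "\<dots> \<le> (step ^^ card V) (\<lambda>_. 1) S"
    by (rule step_iter_mono[OF assms]) (auto simp: transient_def)
  finally show ?thesis using fixed transient_S by (simp add: step_iter_const)
qed

lemma survival_Suc_le: "S \<subseteq> V \<Longrightarrow> survival (Suc n) S \<le> survival n S"
proof -
  assume "S \<subseteq> V"
  have "step transient S' \<le> transient S'" if "S' \<subseteq> V" for S'
    using step_mono[OF that, of transient "\<lambda>_. 1"]
    by (cases "S' = V \<or> S' = {}") (auto simp: step_absorbing step_const transient_def)
  then show ?thesis
    unfolding funpow_Suc_right comp_def by (rule step_iter_mono[OF \<open>S \<subseteq> V\<close>])
qed

lemma survival_mult_card_V:
  "S \<subseteq> V \<Longrightarrow> survival (m * card V) S \<le> (1 - min_weight ^ card V) ^ m"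
proof (induction m arbitrary: S)
  case 0
  then show ?case by (simp add: transient_def)
next
  case (Suc m)
  have "survival (Suc m * card V) S = (step ^^ (m * card V)) (survival (card V)) S"
    by (simp only: mult_Suc add.commute[of "card V"] funpow_add comp_apply)
  also have "\<dots> \<le> (step ^^ (m * card V)) (\<lambda>S. (1 - min_weight ^ card V) * transient S) S"
    by (rule step_iter_mono[OF Suc.prems]) (rule survival_card_V)
  also have "\<dots> = (1 - min_weight ^ card V) * survival (m * card V) S"
    by (rule step_iter_scale)
  also have "\<dots> \<le> (1 - min_weight ^ card V) * (1 - min_weight ^ card V) ^ m"
    using min_weight_pos min_weight_le_one
    by (intro mult_left_mono[OF Suc.IH[OF Suc.prems]]) (simp add: power_le_one)
  finally show ?case by simp
qed

lemma survival_tendsto_zero: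
  assumes "S \<subseteq> V" shows "(\<lambda>n. survival n S) \<longlonglongrightarrow> 0"
proof (rule tendsto_sandwich[where f = "\<lambda>_. 0"
      and h = "\<lambda>n. (1 - min_weight ^ card V) ^ (n div card V)"])
  show "\<forall>\<^sub>F n in sequentially. 0 \<le> survival n S"
    using survival_nonneg[OF assms] by simp
  have "survival n S \<le> (1 - min_weight ^ card V) ^ (n div card V)" for n
  proof -
    have "survival n S \<le> survival (n div card V * card V) S"
      by (rule lift_Suc_antimono_le[of "\<lambda>n. survival n S"])
        (use survival_Suc_le[OF assms] in auto)
    also have "\<dots> \<le> (1 - min_weight ^ card V) ^ (n div card V)"
      by (rule survival_mult_card_V[OF assms])
    finally show ?thesis .
  qed
  then show "\<forall>\<^sub>F n in sequentially. survival n S \<le> (1 - min_weight ^ card V) ^ (n div card V)"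
    by simp
  have "(\<lambda>n. (1 - min_weight ^ card V) ^ n) \<longlonglongrightarrow> 0"
    using min_weight_pos min_weight_le_one
    by (intro LIMSEQ_power_zero) (simp add: power_le_one)
  then show "(\<lambda>n. (1 - min_weight ^ card V) ^ (n div card V)) \<longlonglongrightarrow> 0"
    using filterlim_compose filterlim_at_top_div_const_nat[OF card_V_pos] by blast
qed simp

theorem fixation_prob_eq_harmonic:
  assumes harmonic: "\<And>S. S \<subseteq> V \<Longrightarrow> step \<phi> S = \<phi> S"
    and fixed: "\<phi> V = 1" and lost: "\<phi> {} = 0" and "S \<subseteq> V"
  shows "fixation_prob V E green aG aR bG bR S = \<phi> S"
proof -
  define M where "M = (\<Sum>S'\<in>Pow V. \<bar>\<phi> S'\<bar>)"
  have bounded: "\<bar>\<phi> S'\<bar> \<le> M" if "S' \<subseteq> V" for S'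
    unfolding M_def by (rule member_le_sum) (use that finite_V in auto)
  then have err: "- (M * transient S') \<le> \<phi> S' - (if S' = V then 1 else 0)
      \<and> \<phi> S' - (if S' = V then 1 else 0) \<le> M * transient S'" if "S' \<subseteq> V" for S'
    using bounded[OF that] fixed lost V_nonempty by (auto simp: transient_def abs_le_iff)
  have bound: "\<bar>fix_after n S - \<phi> S\<bar> \<le> M * survival n S" for n
  proof -
    have "(step ^^ n) (\<lambda>S. (- M) * transient S) S
        \<le> (step ^^ n) (\<lambda>S. \<phi> S - (if S = V then 1 else 0)) S"
      "(step ^^ n) (\<lambda>S. \<phi> S - (if S = V then 1 else 0)) S
        \<le> (step ^^ n) (\<lambda>S. M * transient S) S"
      using err by (auto intro!: step_iter_mono[OF \<open>S \<subseteq> V\<close>])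
    then show ?thesis using step_iter_scale[of n "- M" transient S]
      by (simp add: step_iter_scale step_iter_diff step_iter_harmonic[OF harmonic \<open>S \<subseteq> V\<close>]
          fix_after_eq_step_iter abs_le_iff)
  qed
  have "(\<lambda>n. M * survival n S) \<longlonglongrightarrow> 0"
    using tendsto_mult_right_zero[OF survival_tendsto_zero[OF \<open>S \<subseteq> V\<close>]] by simp
  then have "(\<lambda>n. fix_after n S - \<phi> S) \<longlonglongrightarrow> 0"
    by (rule tendsto_0_le[where K = 1])
      (simp add: always_eventually order_trans[OF bound abs_ge_self])
  then have "(\<lambda>n. fix_after n S) \<longlonglongrightarrow> \<phi> S" by (simp add: LIM_zero_iff)
  then show ?thesis unfolding fixation_prob_def by (rule limI)
qed

lemma mean_fixation_eq_harmonic: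
  assumes "\<And>S. S \<subseteq> V \<Longrightarrow> step \<phi> S = \<phi> S" "\<phi> V = 1" "\<phi> {} = 0"
  shows "mean_fixation_A V E green aG aR bG bR = (\<Sum>v\<in>V. \<phi> {v}) / card V"
  unfolding mean_fixation_A_def using fixation_prob_eq_harmonic[OF assms] by simp

definition site_fitness :: "'v \<Rightarrow> real" where
  "site_fitness v = (if green v then aG else aR)"

lemma mean_fixation_neutral:
  assumes "aG = bG" "aR = bR"
  shows "mean_fixation_A V E green aG aR bG bR = 1 / card V"
proof -
  define Z where "Z = (\<Sum>v\<in>V. site_fitness v)"
  define \<phi> where "\<phi> S = (\<Sum>v\<in>S. site_fitness v) / Z" for S
  have "Z > 0" unfolding Z_def site_fitness_def
    using fitness_pos by (intro sum_pos[OF finite_V V_nonempty]) auto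
  have "step \<phi> S = \<phi> S" if "S \<subseteq> V" for S
  proof (rule step_balanced)
    fix i j assume "E i j" "i \<in> S" "j \<notin> S"
    moreover have "finite S" using that finite_V finite_subset by blast
    ultimately have "\<phi> (insert j S) - \<phi> S = site_fitness j / Z"
      "\<phi> (S - {i}) - \<phi> S = - site_fitness i / Z"
      using \<open>Z > 0\<close> by (simp_all add: \<phi>_def sum.remove field_simps)
    moreover have "fit S i = site_fitness i" "fit S j = site_fitness j"
      unfolding fitness_def site_fitness_def using assms by simp_all
    ultimately show "fit S i * (\<phi> (insert j S) - \<phi> S) + fit S j * (\<phi> (S - {i}) - \<phi> S) = 0"
      by simp
  qed
  moreover have "\<phi> V = 1" "\<phi> {} = 0" using \<open>Z > 0\<close> by (simp_all add: \<phi>_def Z_def)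
  ultimately have "mean_fixation_A V E green aG aR bG bR = (\<Sum>v\<in>V. \<phi> {v}) / card V"
    by (rule mean_fixation_eq_harmonic)
  also have "\<dots> = 1 / card V" using \<open>Z > 0\<close> by (simp add: \<phi>_def Z_def flip: sum_divide_distrib)
  finally show ?thesis .
qed

definition opposite_ratio :: "'v \<Rightarrow> real" where
  "opposite_ratio v = (if green v then bR / aR else bG / aG)"

lemma mean_fixation_product_form:
  assumes coloring: "proper_two_coloring E green" and same_gap: "aG - bG = aR - bR"
    and nondegenerate: "(\<Prod>v\<in>V. opposite_ratio v) \<noteq> 1"
  shows "mean_fixation_A V E green aG aR bG bR
    = (\<Sum>v\<in>V. 1 - opposite_ratio v) / (card V * (1 - (\<Prod>v\<in>V. opposite_ratio v)))"
proof -
  define D where "D = 1 - (\<Prod>v\<in>V. opposite_ratio v)"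
  define \<phi> where "\<phi> S = (1 - (\<Prod>v\<in>S. opposite_ratio v)) / D" for S
  have "D \<noteq> 0" using nondegenerate by (simp add: D_def)
  have edge_balance: "fit S i * opposite_ratio i * (1 - opposite_ratio j)
      + fit S j * (opposite_ratio i - 1) = 0" if "E i j" "i \<in> S" "j \<notin> S" for S i j
  proof -
    have "green j \<longleftrightarrow> \<not> green i" using coloring that(1) by (auto simp: proper_two_coloring_def)
    then have "fit S i * opposite_ratio i * (1 - opposite_ratio j) + fit S j * (opposite_ratio i - 1)
        = opposite_ratio i * ((aG - bG) - (aR - bR)) * (if green i then 1 else -1)"
      using that fitness_pos
      by (cases "green i") (simp_all add: fitness_def opposite_ratio_def field_simps)
    then show ?thesis using same_gap by simp
  qed
  have "step \<phi> S = \<phi> S" if "S \<subseteq> V" for S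
  proof (rule step_balanced)
    fix i j assume ij: "E i j" "i \<in> S" "j \<notin> S"
    define rest where "rest = (\<Prod>v\<in>S - {i}. opposite_ratio v)"
    have "finite S" using that finite_V finite_subset by blast
    then have "(\<Prod>v\<in>S. opposite_ratio v) = opposite_ratio i * rest"
      "(\<Prod>v\<in>insert j S. opposite_ratio v) = opposite_ratio j * (opposite_ratio i * rest)"
      using ij by (simp_all add: rest_def prod.remove)
    then have "fit S i * (\<phi> (insert j S) - \<phi> S) + fit S j * (\<phi> (S - {i}) - \<phi> S)
        = rest / D * (fit S i * opposite_ratio i * (1 - opposite_ratio j)
                      + fit S j * (opposite_ratio i - 1))"
      using \<open>D \<noteq> 0\<close> by (simp add: \<phi>_def rest_def field_simps)
    then show "fit S i * (\<phi> (insert j S) - \<phi> S) + fit S j * (\<phi> (S - {i}) - \<phi> S) = 0"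
      by (simp add: edge_balance[OF ij])
  qed
  moreover have "\<phi> V = 1" "\<phi> {} = 0" using \<open>D \<noteq> 0\<close> by (simp_all add: \<phi>_def D_def)
  ultimately have "mean_fixation_A V E green aG aR bG bR = (\<Sum>v\<in>V. \<phi> {v}) / card V"
    by (rule mean_fixation_eq_harmonic)
  then show ?thesis by (simp add: \<phi>_def D_def flip: sum_divide_distrib)
qed

end

lemma sum_by_colour:
  fixes a b :: real
  assumes "finite V"
  shows "(\<Sum>v\<in>V. if green v then a else b) = card {v\<in>V. green v} * a + card {v\<in>V. \<not> green v} * b"
proof -
  have "V \<inter> {x. green x} = {v\<in>V. green v}" "V \<inter> - {x. green x} = {v\<in>V. \<not> green v}" by auto
  then show ?thesis using sum.If_cases[OF assms, of green "\<lambda>_. a" "\<lambda>_. b"] by simp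
qed

lemma prod_by_colour:
  fixes a b :: real
  assumes "finite V"
  shows "(\<Prod>v\<in>V. if green v then a else b) = a ^ card {v\<in>V. green v} * b ^ card {v\<in>V. \<not> green v}"
proof -
  have "V \<inter> {x. green x} = {v\<in>V. green v}" "V \<inter> - {x. green x} = {v\<in>V. \<not> green v}" by auto
  then show ?thesis using prod.If_cases[OF assms, of green "\<lambda>_. a" "\<lambda>_. b"] by simp
qed

definition rho_closed :: "nat \<Rightarrow> real \<Rightarrow> real \<Rightarrow> real" where
  "rho_closed n r \<sigma> = r * (r - 1) / ((r\<^sup>2 - \<sigma>\<^sup>2) * (1 - ((1 - \<sigma>\<^sup>2) / (r\<^sup>2 - \<sigma>\<^sup>2)) ^ n))"

lemma squares_below:
  fixes r \<sigma> :: real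
  assumes "0 \<le> \<sigma>" "\<sigma> < min 1 r"
  shows "\<sigma>\<^sup>2 < r\<^sup>2" "\<sigma>\<^sup>2 < 1"
  using assms power_strict_mono[of \<sigma> 1 2] power_strict_mono[of \<sigma> r 2] by auto

lemma mean_fixation_balanced_colouring:
  assumes graph: "connected_regular_graph V E k" and coloring: "proper_two_coloring E green"
    and greens: "card {v\<in>V. green v} = n" and reds: "card {v\<in>V. \<not> green v} = n"
    and "n \<ge> 1" and "r > 0" "r \<noteq> 1" and "0 \<le> \<sigma>" "\<sigma> < min 1 r"
  shows "mean_fixation_A V E green (r + \<sigma>) (r - \<sigma>) (1 + \<sigma>) (1 - \<sigma>) = rho_closed n r \<sigma>"
proof -
  interpret moran_process V E k green "r + \<sigma>" "r - \<sigma>" "1 + \<sigma>" "1 - \<sigma>"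
    using assms(7-9) by (intro moran_process.intro[OF graph] moran_process_axioms.intro) auto
  define p where "p = (1 - \<sigma>) / (r - \<sigma>)"
  define q where "q = (1 + \<sigma>) / (r + \<sigma>)"
  define x where "x = (1 - \<sigma>\<^sup>2) / (r\<^sup>2 - \<sigma>\<^sup>2)"
  have "\<sigma>\<^sup>2 < r\<^sup>2" "\<sigma>\<^sup>2 < 1" using squares_below assms(8,9) by auto
  have "p * q = x" unfolding p_def q_def x_def by (simp add: field_simps power2_eq_square)
  have "x > 0" "x \<noteq> 1"
    using \<open>\<sigma>\<^sup>2 < r\<^sup>2\<close> \<open>\<sigma>\<^sup>2 < 1\<close> \<open>r > 0\<close> \<open>r \<noteq> 1\<close> by (auto simp: x_def power2_eq_1_iff)
  then have "x ^ n \<noteq> 1" using \<open>n \<ge> 1\<close> power_eq_iff_eq_base[of n x 1] by simp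
  have ratio: "opposite_ratio = (\<lambda>v. if green v then p else q)"
    by (simp add: fun_eq_iff opposite_ratio_def p_def q_def)
  have "card V = 2 * n" using sum_by_colour[OF finite_V, of green 1 1] greens reds by simp
  have prod_V: "(\<Prod>v\<in>V. opposite_ratio v) = x ^ n"
    using prod_by_colour[OF finite_V, of green p q] greens reds
    by (simp add: ratio flip: power_mult_distrib \<open>p * q = x\<close>)
  have sum_V: "(\<Sum>v\<in>V. 1 - opposite_ratio v) = n * (2 - p - q)"
    using sum_by_colour[OF finite_V, of green "1 - p" "1 - q"] greens reds
    unfolding ratio by (simp add: if_distrib algebra_simps)
  have "mean_fixation_A V E green (r + \<sigma>) (r - \<sigma>) (1 + \<sigma>) (1 - \<sigma>)
      = (2 - p - q) / 2 / (1 - x ^ n)"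
    using mean_fixation_product_form[OF coloring] \<open>x ^ n \<noteq> 1\<close> \<open>n \<ge> 1\<close>
    by (simp add: prod_V sum_V \<open>card V = 2 * n\<close>)
  also have "(2 - p - q) / 2 = r * (r - 1) / (r\<^sup>2 - \<sigma>\<^sup>2)"
    using assms(8,9) \<open>\<sigma>\<^sup>2 < r\<^sup>2\<close> unfolding p_def q_def by (simp add: field_simps power2_eq_square)
  finally show ?thesis by (simp add: rho_closed_def x_def)
qed

lemma rho_closed_geometric:
  fixes r \<sigma> :: real
  assumes "n \<ge> 1" "r > 0" "r \<noteq> 1" "0 \<le> \<sigma>" "\<sigma> < min 1 r"
  shows "rho_closed n r \<sigma> = r / ((r + 1) * (\<Sum>m<n. ((1 - \<sigma>\<^sup>2) / (r\<^sup>2 - \<sigma>\<^sup>2)) ^ m))"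
proof -
  define x where "x = (1 - \<sigma>\<^sup>2) / (r\<^sup>2 - \<sigma>\<^sup>2)"
  have "\<sigma>\<^sup>2 < r\<^sup>2" "\<sigma>\<^sup>2 < 1" using squares_below assms(4,5) by auto
  then have "x \<ge> 0" by (simp add: x_def)
  have "(\<Sum>m<n. x ^ m) \<ge> (\<Sum>m\<in>{0}. x ^ m)"
    by (rule sum_mono2) (use assms(1) \<open>x \<ge> 0\<close> in auto)
  then have "(\<Sum>m<n. x ^ m) > 0" by simp
  have factor: "1 - x ^ n = (1 - x) * (\<Sum>m<n. x ^ m)"
    using power_diff_1_eq[of x n] by (simp add: algebra_simps)
  have scale: "(r\<^sup>2 - \<sigma>\<^sup>2) * (1 - x) = (r - 1) * (r + 1)"
    using \<open>\<sigma>\<^sup>2 < r\<^sup>2\<close> by (simp add: x_def field_simps power2_eq_square)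
  have "rho_closed n r \<sigma> = r * (r - 1) / ((r\<^sup>2 - \<sigma>\<^sup>2) * (1 - x ^ n))"
    by (simp add: rho_closed_def x_def)
  also have "\<dots> = r * (r - 1) / ((r - 1) * (r + 1) * (\<Sum>m<n. x ^ m))"
    unfolding factor scale[symmetric] by (simp add: mult.assoc)
  also have "\<dots> = r / ((r + 1) * (\<Sum>m<n. x ^ m))"
    using assms(2,3) \<open>(\<Sum>m<n. x ^ m) > 0\<close> by (simp add: divide_simps)
  finally show ?thesis by (simp add: x_def)
qed

lemma shifted_ratio_antimono:
  fixes a b c :: real
  assumes "1 \<le> c" "a \<le> b" "b < c"
  shows "(1 - b) / (c - b) \<le> (1 - a) / (c - a)"
proof -
  have "(1 - a) * (c - b) - (1 - b) * (c - a) = (b - a) * (c - 1)" by (simp add: algebra_simps)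
  moreover have "(b - a) * (c - 1) \<ge> 0" using assms by simp
  ultimately have "(1 - b) * (c - a) \<le> (1 - a) * (c - b)" by linarith
  then show ?thesis using assms by (simp add: divide_simps)
qed

lemma shifted_ratio_mono:
  fixes a b c :: real
  assumes "c \<le> 1" "a \<le> b" "b < c"
  shows "(1 - a) / (c - a) \<le> (1 - b) / (c - b)"
proof -
  have "(1 - b) * (c - a) - (1 - a) * (c - b) = (b - a) * (1 - c)" by (simp add: algebra_simps)
  moreover have "(b - a) * (1 - c) \<ge> 0" using assms by simp
  ultimately have "(1 - a) * (c - b) \<le> (1 - b) * (c - a)" by linarith
  then show ?thesis using assms by (simp add: divide_simps)
qed

lemma rho_closed_le:
  fixes r \<sigma> \<tau> :: real
  assumes "n \<ge> 1" "r > 0" "r \<noteq> 1" "\<sigma> \<in> {0..<min 1 r}" "\<tau> \<in> {0..<min 1 r}"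
    and ratio_le: "(1 - \<tau>\<^sup>2) / (r\<^sup>2 - \<tau>\<^sup>2) \<le> (1 - \<sigma>\<^sup>2) / (r\<^sup>2 - \<sigma>\<^sup>2)"
  shows "rho_closed n r \<sigma> \<le> rho_closed n r \<tau>"
proof -
  have "\<tau>\<^sup>2 < r\<^sup>2" "\<tau>\<^sup>2 < 1" using squares_below assms(5) by auto
  then have "0 \<le> (1 - \<tau>\<^sup>2) / (r\<^sup>2 - \<tau>\<^sup>2)" by simp
  then have "(\<Sum>m<n. ((1 - \<tau>\<^sup>2) / (r\<^sup>2 - \<tau>\<^sup>2)) ^ m) \<le> (\<Sum>m<n. ((1 - \<sigma>\<^sup>2) / (r\<^sup>2 - \<sigma>\<^sup>2)) ^ m)"
    using ratio_le by (intro sum_mono power_mono) auto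
  moreover have "(\<Sum>m<n. ((1 - \<tau>\<^sup>2) / (r\<^sup>2 - \<tau>\<^sup>2)) ^ m) \<ge> (\<Sum>m\<in>{0}. ((1 - \<tau>\<^sup>2) / (r\<^sup>2 - \<tau>\<^sup>2)) ^ m)"
    by (rule sum_mono2) (use assms(1) \<open>0 \<le> (1 - \<tau>\<^sup>2) / (r\<^sup>2 - \<tau>\<^sup>2)\<close> in auto)
  ultimately show ?thesis
    using assms(2) rho_closed_geometric[OF assms(1-3)] assms(4,5)
    by (auto intro!: divide_left_mono mult_left_mono mult_pos_pos)
qed

lemma rho_closed_mono:
  assumes "n \<ge> 1" "r > 1"
  shows "mono_on {0..<min 1 r} (rho_closed n r)"
proof (rule mono_onI)
  fix \<sigma> \<tau> assume range: "\<sigma> \<in> {0..<min 1 r}" "\<tau> \<in> {0..<min 1 r}" and "\<sigma> \<le> \<tau>"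
  have "\<tau>\<^sup>2 < r\<^sup>2" using squares_below range(2) by auto
  moreover have "\<sigma>\<^sup>2 \<le> \<tau>\<^sup>2" using range \<open>\<sigma> \<le> \<tau>\<close> by (simp add: power_mono)
  moreover have "1 \<le> r\<^sup>2" using assms(2) by (simp add: one_le_power)
  ultimately show "rho_closed n r \<sigma> \<le> rho_closed n r \<tau>"
    using assms range by (intro rho_closed_le shifted_ratio_antimono) auto
qed

lemma rho_closed_antimono:
  assumes "n \<ge> 1" "0 < r" "r < 1"
  shows "antimono_on {0..<min 1 r} (rho_closed n r)"
proof (rule monotone_onI)
  fix \<sigma> \<tau> assume range: "\<sigma> \<in> {0..<min 1 r}" "\<tau> \<in> {0..<min 1 r}" and "\<sigma> \<le> \<tau>"
  have "\<tau>\<^sup>2 < r\<^sup>2" using squares_below range(2) by auto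
  moreover have "\<sigma>\<^sup>2 \<le> \<tau>\<^sup>2" using range \<open>\<sigma> \<le> \<tau>\<close> by (simp add: power_mono)
  moreover have "r\<^sup>2 \<le> 1" using assms(2,3) by (simp add: power_le_one)
  ultimately show "rho_closed n r \<tau> \<le> rho_closed n r \<sigma>"
    using assms range by (intro rho_closed_le shifted_ratio_mono) auto
qed

theorem mainTheorem4:
  fixes V :: "'v set" and E :: "'v \<Rightarrow> 'v \<Rightarrow> bool" and green :: "'v \<Rightarrow> bool"
  defines "\<rho> \<equiv> (\<lambda>r \<sigma>. mean_fixation_A V E green (r + \<sigma>) (r - \<sigma>) (1 + \<sigma>) (1 - \<sigma>))"
  assumes "simple_graph V E" and "connected_graph V E" and "regular_graph V E"
    and "proper_two_coloring E green"
    and "card {v\<in>V. green v} = card V div 2" and "card {v\<in>V. \<not> green v} = card V div 2"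
  shows "(\<forall>r \<sigma>. r > 0 \<longrightarrow> r \<noteq> 1 \<longrightarrow> 0 \<le> \<sigma> \<longrightarrow> \<sigma> < min 1 r \<longrightarrow>
            \<rho> r \<sigma> = r * (r - 1) /
              ((r\<^sup>2 - \<sigma>\<^sup>2) * (1 - ((1 - \<sigma>\<^sup>2) / (r\<^sup>2 - \<sigma>\<^sup>2)) ^ (card V div 2))))
       \<and> (\<forall>r. r > 1 \<longrightarrow> mono_on {0..<min 1 r} (\<rho> r))
       \<and> (\<forall>r. 0 < r \<longrightarrow> r < 1 \<longrightarrow> antimono_on {0..<min 1 r} (\<rho> r))
       \<and> (\<forall>\<sigma>. 0 \<le> \<sigma> \<longrightarrow> \<sigma> < 1 \<longrightarrow> \<rho> 1 \<sigma> = 1 / real (card V))"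
proof -
  define n where "n = card V div 2"
  have "finite V" "V \<noteq> {}" using assms(2,3) by (simp_all add: simple_graph_def connected_graph_def)
  then have "card V = 2 * n" "n \<ge> 1"
    using sum_by_colour[of V green 1 1] assms(6,7) by (auto simp: n_def)
  then obtain k where graph: "connected_regular_graph V E k"
    using connected_regular_graphI[OF assms(2-4)] by auto
  have closed: "\<rho> r \<sigma> = rho_closed n r \<sigma>" if "r > 0" "r \<noteq> 1" "0 \<le> \<sigma>" "\<sigma> < min 1 r" for r \<sigma>
    unfolding \<rho>_def
    using mean_fixation_balanced_colouring[OF graph assms(5)] assms(6,7) \<open>n \<ge> 1\<close> that
    by (simp add: n_def)
  have "mono_on {0..<min 1 r} (\<rho> r)" if "r > 1" for r
    using rho_closed_mono[OF \<open>n \<ge> 1\<close> that] closed that by (auto simp: monotone_on_def)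
  moreover have "antimono_on {0..<min 1 r} (\<rho> r)" if "0 < r" "r < 1" for r
    using rho_closed_antimono[OF \<open>n \<ge> 1\<close> that] closed that by (auto simp: monotone_on_def)
  moreover have "\<rho> 1 \<sigma> = 1 / card V" if "0 \<le> \<sigma>" "\<sigma> < 1" for \<sigma>
  proof -
    interpret moran_process V E k green "1 + \<sigma>" "1 - \<sigma>" "1 + \<sigma>" "1 - \<sigma>"
      using that by (intro moran_process.intro[OF graph] moran_process_axioms.intro) auto
    show ?thesis unfolding \<rho>_def by (rule mean_fixation_neutral) simp_all
  qed
  ultimately show ?thesis using closed by (simp add: rho_closed_def n_def)
qed

end
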